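(* The function $\tilde f$ is continuous at every point of $\mathbf{R}\setminus\mathbf{Q}$, and $$\lim_{x\to0^+,\ x\notin\mathbf{Q}}\tilde f(x)=1,\qquad \lim_{x\to\frac12^-,\ x\notin\mathbf{Q}}\tilde f(x)=0.$$
   Context: Let $A(y)=1/y-\lfloor 1/y\rfloor$ be the Gauss map. Define $w$ on irrationals $y\in(0,\tfrac12)$ by $w(y)=\frac{y}{2}\log\frac{1-y}{y}-\log(1-y)$, and extend $w$ to all irrationals as an even $1$-periodic function (so $w(y)=w(1-y)$ for irrational $y\in(\tfrac12,1)$); this $w$ coincides with the even part $W^+$ of the Wilton function. For irrational $x\in(0,\tfrac12)$ let $n=\lfloor 1/x\rfloor\ (\ge2)$ and define $$\Phi(x)=x\log x+xA(x)\log\bigl(xA(x)\bigr)+x\sum_{j=1}^{n-1}\log(1-jx),\qquad f(x)=-w(x)-x\,w(A(x))-\Phi(x).$$ Let $\tilde f$ be the odd $1$-periodic extension of $f$ to $\mathbf{R}\setminus\mathbf{Q}$: for irrational $x$, $\tilde f(x)=f(\{x\})$ if $\{x\}\in(0,\tfrac12)$ and $\tilde f(x)=-f(1-\{x\})$ if $\{x\}\in(\tfrac12,1)$, where $\{x\}=x-\lfloor x\rfloor$. *)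

theory Defs
  imports "HOL-Analysis.Analysis"
begin

definition gauss_map :: "real \<Rightarrow> real" where
  "gauss_map y = 1 / y - of_int \<lfloor>1 / y\<rfloor>"

definition w0 :: "real \<Rightarrow> real" where
  "w0 y = y / 2 * ln ((1 - y) / y) - ln (1 - y)"

text \<open>Even 1-periodic extension of w0 (only meaningful at irrationals).\<close>
definition wW :: "real \<Rightarrow> real" where
  "wW y = (let t = frac y in if t < 1/2 then w0 t else w0 (1 - t))"

definition Phi :: "real \<Rightarrow> real" where
  "Phi x = (let n = nat \<lfloor>1 / x\<rfloor> in
      x * ln x + x * gauss_map x * ln (x * gauss_map x)
      + x * (\<Sum>j=1..n-1. ln (1 - real j * x)))"

definition f0 :: "real \<Rightarrow> real" where
  "f0 x = - wW x - x * wW (gauss_map x) - Phi x"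

text \<open>Odd 1-periodic extension of f0 (only meaningful at irrationals).\<close>
definition ftilde :: "real \<Rightarrow> real" where
  "ftilde x = (let t = frac x in if t < 1/2 then f0 t else - f0 (1 - t))"

end

theory Submission
  imports Defs "HOL-Real_Asymp.Real_Asymp"
begin

text \<open>At an irrational point \<open>\<lfloor>x\<rfloor>\<close> and \<open>\<lfloor>1/x\<rfloor>\<close> are locally constant, so near it
  \<open>ftilde\<close> is a finite combination of logarithms and hence continuous. As \<open>x \<rightarrow> 0\<^sup>+\<close>, the sum
  \<open>x \<Sum>\<^sub>j ln (1 - j x)\<close> in \<open>\<Phi>\<close> is a Riemann sum of the decreasing function \<open>ln (1 - t)\<close> over
  \<open>(0, 1 - x A(x))\<close>, squeezed between values of its primitive \<open>-(1 - t) ln (1 - t) - t\<close>; it tends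
  to \<open>\<integral>\<^sub>0\<^sup>1 ln (1 - t) dt = -1\<close>, while the other terms of \<open>f\<close> vanish because \<open>w\<close> is bounded and
  \<open>w(x) \<rightarrow> 0\<close>. Just below \<open>1/2\<close> one has \<open>\<lfloor>1/x\<rfloor> = 2\<close>, so \<open>f\<close> is an explicit elementary
  function, with limit \<open>-ln 2 - ln (1/2) = 0\<close>.\<close>

lemma gauss_map_eq_frac: "gauss_map y = frac (1 / y)"
  by (simp add: gauss_map_def frac_def)

lemma one_div_notin_Ints:
  fixes x :: real
  shows "x \<notin> \<rat> \<Longrightarrow> 1 / x \<notin> \<int>"
  using Ints_subset_Rats by (auto simp: divide_inverse)

lemma isCont_gauss_map: "1 / x \<notin> \<int> \<Longrightarrow> isCont gauss_map x"
proof -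
  assume nonint: "1 / x \<notin> \<int>"
  then have "x \<noteq> 0" by auto
  then have "isCont (\<lambda>y. 1 / y) x" by (intro continuous_intros)
  then show ?thesis
    unfolding gauss_map_eq_frac[abs_def] using continuous_frac[OF nonint] by (rule isCont_o2)
qed

lemma frac_irrational:
  fixes x :: real
  assumes "x \<notin> \<rat>"
  shows "x \<notin> \<int>" "0 < frac x" "frac x < 1" "frac x \<noteq> 1/2" "1 - frac x \<notin> \<rat>"
proof -
  show "x \<notin> \<int>" using assms Ints_subset_Rats by blast
  then show "0 < frac x" by simp
  show "frac x < 1" by (rule frac_lt_1)
  have "frac x \<notin> \<rat>" using assms by simp
  moreover have "(1::real) / 2 \<in> \<rat>" by simp
  ultimately show "frac x \<noteq> 1/2" "1 - frac x \<notin> \<rat>" by (metis, simp add: Rats_diff_iff)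
qed

lemma gauss_map_irrational:
  fixes x :: real
  shows "x \<notin> \<rat> \<Longrightarrow> gauss_map x \<notin> \<rat>"
  by (simp add: gauss_map_eq_frac divide_inverse)

lemma isCont_frac_reflection:
  fixes g h :: "real \<Rightarrow> real"
  assumes "y \<notin> \<int>" "frac y \<noteq> 1/2"
    and "frac y < 1/2 \<Longrightarrow> isCont g (frac y)"
    and "1/2 < frac y \<Longrightarrow> isCont h (1 - frac y)"
  shows "isCont (\<lambda>z. let t = frac z in if t < 1/2 then g t else h (1 - t)) y"
proof -
  have frac_at_y: "(frac \<longlongrightarrow> frac y) (nhds y)"
    using continuous_frac[OF assms(1)] by (simp add: isCont_def tendsto_at_iff_tendsto_nhds)
  show ?thesis
  proof (cases "frac y < 1/2")
    case True
    have "eventually (\<lambda>z. frac z < 1/2) (nhds y)"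
      using order_tendstoD(2)[OF frac_at_y True] .
    then have "eventually (\<lambda>z. (let t = frac z in if t < 1/2 then g t else h (1 - t)) = g (frac z)) (nhds y)"
      by eventually_elim simp
    moreover have "isCont (\<lambda>z. g (frac z)) y"
      using continuous_frac[OF assms(1)] assms(3)[OF True] by (rule isCont_o2)
    ultimately show ?thesis by (simp add: isCont_cong)
  next
    case False
    with assms(2) have upper: "1/2 < frac y" by simp
    have "eventually (\<lambda>z. 1/2 < frac z) (nhds y)"
      using order_tendstoD(1)[OF frac_at_y upper] .
    then have "eventually (\<lambda>z. (let t = frac z in if t < 1/2 then g t else h (1 - t)) = h (1 - frac z)) (nhds y)"
      by eventually_elim simp
    moreover have "isCont (\<lambda>z. 1 - frac z) y"
      using continuous_frac[OF assms(1)] by (rule continuous_diff[OF continuous_const])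
    then have "isCont (\<lambda>z. h (1 - frac z)) y"
      using assms(4)[OF upper] by (rule isCont_o2)
    ultimately show ?thesis by (simp add: isCont_cong)
  qed
qed

lemma isCont_w0: "0 < t \<Longrightarrow> t < 1 \<Longrightarrow> isCont w0 t"
  unfolding w0_def by (intro continuous_intros) auto

lemma isCont_wW:
  fixes y :: real
  assumes "y \<notin> \<rat>"
  shows "isCont wW y"
  unfolding wW_def[abs_def] using frac_irrational[OF assms]
  by (intro isCont_frac_reflection isCont_w0) simp_all

lemma isCont_Phi:
  fixes x :: real
  assumes "0 < x" "1 / x \<notin> \<int>"
  shows "isCont Phi x"
proof -
  define n where "n = nat \<lfloor>1 / x\<rfloor>"
  have "((\<lambda>y. 1 / y) \<longlongrightarrow> 1 / x) (nhds x)"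
    using assms(1) by (intro tendsto_intros filterlim_ident) auto
  then have "eventually (\<lambda>y. \<lfloor>1 / y\<rfloor> = \<lfloor>1 / x\<rfloor>) (nhds x)"
    using assms(2) by (rule eventually_floor_eq)
  then have "eventually (\<lambda>y. Phi y = y * ln y + y * gauss_map y * ln (y * gauss_map y)
      + y * (\<Sum>j=1..n-1. ln (1 - real j * y))) (nhds x)"
    by eventually_elim (simp add: Phi_def n_def)
  moreover have "isCont (\<lambda>y. y * ln y + y * gauss_map y * ln (y * gauss_map y)
      + y * (\<Sum>j=1..n-1. ln (1 - real j * y))) x"
  proof -
    have "0 < gauss_map x"
      using assms(2) by (simp add: gauss_map_eq_frac)
    moreover have "real j * x \<noteq> 1" if "j < n" for j
    proof -
      have "real n \<le> 1 / x" using assms(1) by (simp add: n_def)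
      with that assms(1) have "real j * x < 1 / x * x"
        by (intro mult_strict_right_mono) auto
      then show ?thesis using assms(1) by simp
    qed
    ultimately show ?thesis
      using assms isCont_gauss_map by (intro continuous_intros) auto
  qed
  ultimately show ?thesis by (simp add: isCont_cong)
qed

lemma isCont_f0:
  fixes x :: real
  assumes "0 < x" "x \<notin> \<rat>"
  shows "isCont f0 x"
  unfolding f0_def[abs_def] using assms one_div_notin_Ints[OF assms(2)]
  by (intro continuous_intros isCont_wW isCont_Phi isCont_o2[OF isCont_gauss_map isCont_wW]
      gauss_map_irrational) simp_all

lemma isCont_ftilde:
  fixes x :: real
  assumes "x \<notin> \<rat>"
  shows "isCont ftilde x"
  unfolding ftilde_def[abs_def] using frac_irrational[OF assms]
  by (intro isCont_frac_reflection continuous_minus isCont_f0) (simp_all add: assms)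

lemma w0_bounds:
  assumes "0 \<le> t" "t \<le> 1/2"
  shows "0 \<le> w0 t" "w0 t \<le> 2"
proof -
  have "0 \<le> t / 2 * ln ((1 - t) / t) \<and> t / 2 * ln ((1 - t) / t) \<le> 1"
  proof (cases "t = 0")
    case False
    then have ratio: "1 \<le> (1 - t) / t" using assms by (simp add: field_simps)
    then have "ln ((1 - t) / t) \<le> (1 - t) / t"
      using ln_le_minus_one[of "(1 - t) / t"] by linarith
    then have "t / 2 * ln ((1 - t) / t) \<le> t / 2 * ((1 - t) / t)"
      using assms by (intro mult_left_mono) auto
    moreover have "t / 2 * ((1 - t) / t) \<le> 1" using assms False by (simp add: field_simps)
    ultimately show ?thesis using assms ratio by simp
  qed simp
  moreover have "0 \<le> - ln (1 - t)" "- ln (1 - t) \<le> 1"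
  proof -
    show "0 \<le> - ln (1 - t)" using assms by simp
    have "ln (1/2) \<le> ln (1 - t)" using assms by (subst ln_le_cancel_iff) auto
    then show "- ln (1 - t) \<le> 1" using ln_le_minus_one[of 2] by (simp add: ln_div)
  qed
  ultimately show "0 \<le> w0 t" "w0 t \<le> 2" unfolding w0_def by linarith+
qed

lemma wW_bounds: "0 \<le> wW y" "wW y \<le> 2"
  using w0_bounds[of "frac y"] w0_bounds[of "1 - frac y"] frac_lt_1[of y]
  by (auto simp: wW_def Let_def)

lemma increment_bounds_antimono_deriv:
  fixes F f :: "real \<Rightarrow> real"
  assumes F': "\<And>t. a \<le> t \<Longrightarrow> t \<le> c \<Longrightarrow> (F has_real_derivative f t) (at t)"
    and f_antimono: "\<And>s t. a \<le> s \<Longrightarrow> s \<le> t \<Longrightarrow> t \<le> c \<Longrightarrow> f t \<le> f s"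
    and "a < c"
  shows "(c - a) * f c \<le> F c - F a" "F c - F a \<le> (c - a) * f a"
proof -
  obtain z where z: "a < z" "z < c" "F c - F a = (c - a) * f z"
    using MVT2[OF \<open>a < c\<close> F'] by blast
  then show "(c - a) * f c \<le> F c - F a" "F c - F a \<le> (c - a) * f a"
    using f_antimono[of z c] f_antimono[of a z] by (auto intro: mult_left_mono)
qed

lemma riemann_sum_bounds_antimono_deriv:
  fixes F f :: "real \<Rightarrow> real"
  assumes F': "\<And>t. 0 \<le> t \<Longrightarrow> t < b \<Longrightarrow> (F has_real_derivative f t) (at t)"
    and f_antimono: "\<And>s t. 0 \<le> s \<Longrightarrow> s \<le> t \<Longrightarrow> t < b \<Longrightarrow> f t \<le> f s"
    and "0 < x"
  shows "real m * x < b \<Longrightarrow> (\<Sum>j=1..m. x * f (real j * x)) \<le> F (real m * x) - F 0"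
    and "real (m + 1) * x < b \<Longrightarrow> F (real (m + 1) * x) - F x \<le> (\<Sum>j=1..m. x * f (real j * x))"
proof -
  have step: "x * f (real (Suc k) * x) \<le> F (real (Suc k) * x) - F (real k * x)"
    "F (real (Suc k) * x) - F (real k * x) \<le> x * f (real k * x)"
    if "real (Suc k) * x < b" for k
  proof -
    have lo: "0 \<le> real k * x" and lt: "real k * x < real (Suc k) * x"
      and width: "real (Suc k) * x - real k * x = x"
      using \<open>0 < x\<close> by (simp_all add: algebra_simps)
    have deriv: "(F has_real_derivative f t) (at t)"
      if "real k * x \<le> t" "t \<le> real (Suc k) * x" for t
      using lo that \<open>real (Suc k) * x < b\<close> by (intro F') auto
    have mono: "f t \<le> f s" if "real k * x \<le> s" "s \<le> t" "t \<le> real (Suc k) * x" for s t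
      using lo that \<open>real (Suc k) * x < b\<close> by (intro f_antimono) auto
    show "x * f (real (Suc k) * x) \<le> F (real (Suc k) * x) - F (real k * x)"
      "F (real (Suc k) * x) - F (real k * x) \<le> x * f (real k * x)"
      using increment_bounds_antimono_deriv[of "real k * x" "real (Suc k) * x" F f] deriv mono lt
      unfolding width by blast+
  qed
  show "real m * x < b \<Longrightarrow> (\<Sum>j=1..m. x * f (real j * x)) \<le> F (real m * x) - F 0"
  proof (induction m)
    case (Suc m)
    then have "real m * x < b" using \<open>0 < x\<close> by (simp add: algebra_simps)
    with Suc.IH step(1)[OF Suc.prems] show ?case by simp
  qed simp
  show "real (m + 1) * x < b \<Longrightarrow> F (real (m + 1) * x) - F x \<le> (\<Sum>j=1..m. x * f (real j * x))"
  proof (induction m)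
    case (Suc m)
    then have "real (m + 1) * x < b" using \<open>0 < x\<close> by (simp add: algebra_simps)
    with Suc.IH step(2)[of "Suc m"] Suc.prems show ?case by simp
  qed simp
qed

definition primitive_ln_one_minus :: "real \<Rightarrow> real" where
  "primitive_ln_one_minus t = - (1 - t) * ln (1 - t) - t"

lemma primitive_ln_one_minus_0 [simp]: "primitive_ln_one_minus 0 = 0"
  by (simp add: primitive_ln_one_minus_def)

lemma primitive_ln_one_minus_deriv:
  "t < 1 \<Longrightarrow> (primitive_ln_one_minus has_real_derivative ln (1 - t)) (at t)"
  unfolding primitive_ln_one_minus_def[abs_def]
  by (rule derivative_eq_intros refl | simp)+ (simp add: field_simps)

lemma scaled_gauss_map:
  fixes y :: real
  assumes "0 < y" "1 / y \<notin> \<int>"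
  shows "y * gauss_map y = 1 - real (nat \<lfloor>1 / y\<rfloor>) * y"
    and "0 < y * gauss_map y" "y * gauss_map y < y"
proof -
  show "y * gauss_map y = 1 - real (nat \<lfloor>1 / y\<rfloor>) * y"
    using assms(1) by (simp add: gauss_map_def algebra_simps)
  have "0 < gauss_map y" "gauss_map y < 1"
    using assms(2) frac_lt_1[of "1 / y"] by (simp_all add: gauss_map_eq_frac)
  then show "0 < y * gauss_map y" "y * gauss_map y < y" using assms(1) by simp_all
qed

lemma Phi_sum_bounds:
  fixes y :: real
  assumes "0 < y" "y < 1/2" "1 / y \<notin> \<int>"
  defines "S \<equiv> y * (\<Sum>j=1..nat \<lfloor>1 / y\<rfloor> - 1. ln (1 - real j * y))"
  shows "primitive_ln_one_minus (1 - y * gauss_map y) - primitive_ln_one_minus y \<le> S"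
    and "S \<le> primitive_ln_one_minus (1 - (y * gauss_map y + y))"
proof -
  define n where "n = nat \<lfloor>1 / y\<rfloor>"
  have p: "y * gauss_map y = 1 - real n * y" "0 < y * gauss_map y"
    using scaled_gauss_map[OF assms(1,3)] by (simp_all add: n_def)
  have "2 < 1 / y" using assms(1,2) by (simp add: field_simps)
  then have "2 \<le> n" unfolding n_def by linarith
  then have n: "real (n - 1 + 1) = real n" "real (n - 1) = real n - 1" by simp_all
  have S_sum: "S = (\<Sum>j=1..n-1. y * ln (1 - real j * y))"
    unfolding S_def n_def by (simp add: sum_distrib_left)
  have ln_antimono: "ln (1 - t) \<le> ln (1 - s)" if "s \<le> t" "t < 1" for s t :: real
    using that by simp
  note riemann = riemann_sum_bounds_antimono_deriv[of 1 primitive_ln_one_minus "\<lambda>t. ln (1 - t)",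
      OF primitive_ln_one_minus_deriv ln_antimono assms(1), of "n - 1"]
  have "primitive_ln_one_minus (real n * y) - primitive_ln_one_minus y \<le> S"
    using riemann(2) p n S_sum by simp
  then show "primitive_ln_one_minus (1 - y * gauss_map y) - primitive_ln_one_minus y \<le> S"
    using p by simp
  have "S \<le> primitive_ln_one_minus ((real n - 1) * y)"
    using riemann(1) p n S_sum assms(1) by (simp add: algebra_simps)
  moreover have "(real n - 1) * y = 1 - (y * gauss_map y + y)"
    using p by (simp add: algebra_simps)
  ultimately show "S \<le> primitive_ln_one_minus (1 - (y * gauss_map y + y))" by simp
qed

lemma eventually_at_0_within_irrationals:
  "eventually (\<lambda>y. 0 < y \<and> y < 1/2 \<and> 1 / y \<notin> \<int>) (at (0::real) within ({0<..} - \<rat>))"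
proof -
  have "eventually (\<lambda>y. y \<in> {0<..} - \<rat>) (at (0::real) within ({0<..} - \<rat>))"
    by (simp add: eventually_at_filter)
  moreover have "eventually (\<lambda>y. y < 1/2) (at (0::real) within ({0<..} - \<rat>))"
    by (rule order_tendstoD(2)[OF tendsto_ident_at]) simp
  ultimately show ?thesis
    by eventually_elim (auto simp: one_div_notin_Ints)
qed

lemma filterlim_scaled_gauss_map_at_0:
  "filterlim (\<lambda>y. y * gauss_map y) (at_right 0) (at 0 within ({0<..} - \<rat>))"
proof -
  have bounds: "eventually (\<lambda>y. 0 < y * gauss_map y \<and> y * gauss_map y < y) (at 0 within ({0<..} - \<rat>))"
    using eventually_at_0_within_irrationals by eventually_elim (simp add: scaled_gauss_map(2,3))
  have "((\<lambda>y. y * gauss_map y) \<longlongrightarrow> 0) (at 0 within ({0<..} - \<rat>))"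
    by (rule tendsto_sandwich[OF _ _ tendsto_const tendsto_ident_at])
      (use bounds in \<open>auto elim: eventually_mono simp: less_imp_le\<close>)
  then show ?thesis
    by (rule tendsto_imp_filterlim_at_right) (use bounds in \<open>auto elim: eventually_mono\<close>)
qed

lemma tendsto_Phi_at_0: "(Phi \<longlongrightarrow> -1) (at 0 within ({0<..} - \<rat>))"
proof -
  let ?F = "at (0::real) within ({0<..} - \<rat>)"
  define p where "p y = y * gauss_map y" for y
  define S where "S y = y * (\<Sum>j=1..nat \<lfloor>1 / y\<rfloor> - 1. ln (1 - real j * y))" for y
  have F_right: "?F \<le> at_right 0" by (rule at_le) auto
  have p_right: "filterlim p (at_right 0) ?F"
    unfolding p_def by (rule filterlim_scaled_gauss_map_at_0)
  have p_plus_right: "filterlim (\<lambda>y. p y + y) (at_right 0) ?F"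
  proof -
    have "(p \<longlongrightarrow> 0) ?F" "eventually (\<lambda>y. 0 < p y) ?F"
      using p_right unfolding filterlim_at by (auto elim: eventually_mono)
    then show ?thesis
      using tendsto_add[of p 0 ?F "\<lambda>y. y" 0] tendsto_ident_at eventually_at_0_within_irrationals
      by (auto simp: filterlim_at elim: eventually_elim2)
  qed
  have primitive_at_1: "((\<lambda>u. primitive_ln_one_minus (1 - u)) \<longlongrightarrow> -1) (at_right 0)"
    unfolding primitive_ln_one_minus_def by real_asymp
  have primitive_at_0: "(primitive_ln_one_minus \<longlongrightarrow> 0) (at_right 0)"
    unfolding primitive_ln_one_minus_def[abs_def] by real_asymp
  have lower: "((\<lambda>y. primitive_ln_one_minus (1 - p y) - primitive_ln_one_minus y) \<longlongrightarrow> -1 - 0) ?F"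
    by (intro tendsto_diff filterlim_compose[OF primitive_at_1 p_right] tendsto_mono[OF F_right primitive_at_0])
  have upper: "((\<lambda>y. primitive_ln_one_minus (1 - (p y + y))) \<longlongrightarrow> -1) ?F"
    by (rule filterlim_compose[OF primitive_at_1 p_plus_right])
  have "eventually (\<lambda>y. primitive_ln_one_minus (1 - p y) - primitive_ln_one_minus y \<le> S y
      \<and> S y \<le> primitive_ln_one_minus (1 - (p y + y))) ?F"
    using eventually_at_0_within_irrationals
    by eventually_elim (use Phi_sum_bounds in \<open>simp add: p_def S_def\<close>)
  then have S_lim: "(S \<longlongrightarrow> -1) ?F"
    by (intro tendsto_sandwich[OF _ _ lower[simplified] upper]) (auto elim: eventually_mono)
  have xlnx: "((\<lambda>u::real. u * ln u) \<longlongrightarrow> 0) (at_right 0)" by real_asymp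
  have "((\<lambda>y. y * ln y + p y * ln (p y) + S y) \<longlongrightarrow> 0 + 0 + -1) ?F"
    by (intro tendsto_add tendsto_mono[OF F_right xlnx] filterlim_compose[OF xlnx p_right] S_lim)
  moreover have "Phi = (\<lambda>y. y * ln y + p y * ln (p y) + S y)"
    by (simp add: fun_eq_iff Phi_def p_def S_def mult.assoc)
  ultimately show ?thesis by simp
qed

lemma ftilde_on_lower_half:
  assumes "0 < y" "y < 1/2"
  shows "ftilde y = - w0 y - y * wW (gauss_map y) - Phi y"
proof -
  have "frac y = y" using assms by (simp add: frac_eq)
  then show ?thesis using assms by (simp add: ftilde_def wW_def f0_def)
qed

lemma tendsto_ftilde_at_0: "(ftilde \<longlongrightarrow> 1) (at 0 within ({0<..} - \<rat>))"
proof -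
  let ?F = "at (0::real) within ({0<..} - \<rat>)"
  have F_right: "?F \<le> at_right 0" by (rule at_le) auto
  have w0_lim: "(w0 \<longlongrightarrow> 0) (at_right 0)"
    unfolding w0_def[abs_def] by real_asymp
  have "((\<lambda>y. y * wW (gauss_map y)) \<longlongrightarrow> 0) ?F"
    by (rule tendsto_sandwich[of "\<lambda>_. 0" _ _ "\<lambda>y. 2 * y"])
      (auto simp: eventually_at_filter wW_bounds intro!: mult_left_mono tendsto_eq_intros)
  then have "((\<lambda>y. - w0 y - y * wW (gauss_map y) - Phi y) \<longlongrightarrow> - 0 - 0 - (-1)) ?F"
    by (intro tendsto_diff tendsto_minus tendsto_mono[OF F_right w0_lim] tendsto_Phi_at_0)
  moreover have "eventually (\<lambda>y. - w0 y - y * wW (gauss_map y) - Phi y = ftilde y) ?F"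
    using eventually_at_0_within_irrationals
    by eventually_elim (simp add: ftilde_on_lower_half)
  ultimately show ?thesis by (simp add: Lim_transform_eventually)
qed

lemma ftilde_near_half:
  assumes "2/5 < y" "y < 1/2"
  shows "ftilde y = - w0 y - y * w0 (1 / y - 2)
    - (y * ln y + (1 - 2 * y) * ln (1 - 2 * y) + y * ln (1 - y))"
proof -
  have "2 < 1 / y" "1 / y < 5/2" using assms by (simp_all add: field_simps)
  then have floor: "\<lfloor>1 / y\<rfloor> = 2" by (intro floor_unique) auto
  then have gauss: "gauss_map y = 1 / y - 2" by (simp add: gauss_map_def)
  have "frac (1 / y - 2) = 1 / y - 2"
    using \<open>2 < 1 / y\<close> \<open>1 / y < 5/2\<close> by (simp add: frac_eq)
  then have "wW (gauss_map y) = w0 (1 / y - 2)"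
    using \<open>1 / y < 5/2\<close> by (simp add: gauss wW_def)
  moreover have "y * gauss_map y = 1 - 2 * y"
    using assms by (simp add: gauss algebra_simps)
  then have "Phi y = y * ln y + (1 - 2 * y) * ln (1 - 2 * y) + y * ln (1 - y)"
    by (simp add: Phi_def floor)
  ultimately show ?thesis using assms by (simp add: ftilde_on_lower_half)
qed

lemma tendsto_ftilde_at_half: "(ftilde \<longlongrightarrow> 0) (at (1/2) within ({..<1/2} - \<rat>))"
proof -
  let ?F = "at (1/2::real) within ({..<1/2} - \<rat>)"
  have F_left: "?F \<le> at_left (1/2)" by (rule at_le) auto
  have "((\<lambda>y. - w0 y - y * w0 (1 / y - 2)
      - (y * ln y + (1 - 2 * y) * ln (1 - 2 * y) + y * ln (1 - y))) \<longlongrightarrow> 0) (at_left (1/2))"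
    unfolding w0_def by real_asymp
  moreover have "eventually (\<lambda>y. 2/5 < y \<and> y < 1/2) (at_left (1/2::real))"
    by (auto simp: eventually_at_left_field intro!: exI[of _ "2/5"])
  ultimately have "(ftilde \<longlongrightarrow> 0) (at_left (1/2))"
    by (rule Lim_transform_eventually[OF _ eventually_mono]) (simp add: ftilde_near_half)
  then show ?thesis using F_left by (rule tendsto_mono[rotated])
qed

theorem mainTheorem6:
  shows "(\<forall>x. x \<notin> \<rat> \<longrightarrow> continuous (at x within (- \<rat>)) ftilde)
    \<and> (ftilde \<longlongrightarrow> 1) (at 0 within ({0<..} - \<rat>))
    \<and> (ftilde \<longlongrightarrow> 0) (at (1/2) within ({..<1/2} - \<rat>))"
  using isCont_ftilde tendsto_ftilde_at_0 tendsto_ftilde_at_half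
  by (auto intro: continuous_at_imp_continuous_at_within)

end
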